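(* If $n>1$ and $\gcd(n,30)=1$, then there exists an $n\times n$ panstochastic matrix that is not a convex combination of panmagic permutation matrices.
   Context: Rows and columns of $n\times n$ matrices are indexed by $\Omega_n=\{0,\dots,n-1\}$. The $k$th upward (resp. downward) diagonal consists of positions $(i,j)$ with $i+j\equiv k$ (resp. $i-j\equiv k$) $\pmod n$. A real $n\times n$ matrix is panstochastic if its entries are nonnegative and its entries along every row, column, upward diagonal and downward diagonal sum to $1$. A panmagic permutation matrix is a permutation matrix $P_\pi$ ($(i,j)$ entry $1$ if $i=\pi(j)$, else $0$) that is panstochastic. A convex combination is a linear combination with nonnegative coefficients summing to $1$. *)

theory Defs
  imports Complex_Main "HOL-Combinatorics.Permutations"
begin

text \<open>An n x n real matrix is represented as a function nat => nat => real;
  only the entries with indices in {0..<n} are relevant.\<close>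

definition panstochastic :: "nat \<Rightarrow> (nat \<Rightarrow> nat \<Rightarrow> real) \<Rightarrow> bool" where
  "panstochastic n M \<longleftrightarrow>
     (\<forall>i<n. \<forall>j<n. 0 \<le> M i j) \<and>
     (\<forall>i<n. (\<Sum>j<n. M i j) = 1) \<and>
     (\<forall>j<n. (\<Sum>i<n. M i j) = 1) \<and>
     (\<forall>k<n. (\<Sum>(i,j)\<in>{(i,j). i < n \<and> j < n \<and> (i + j) mod n = k}. M i j) = 1) \<and>
     (\<forall>k<n. (\<Sum>(i,j)\<in>{(i,j). i < n \<and> j < n \<and> (i + n - j) mod n = k}. M i j) = 1)"

definition perm_mat :: "nat \<Rightarrow> (nat \<Rightarrow> nat) \<Rightarrow> nat \<Rightarrow> nat \<Rightarrow> real" where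
  "perm_mat n \<pi> i j = (if i = \<pi> j then 1 else 0)"

definition panmagic_perm :: "nat \<Rightarrow> (nat \<Rightarrow> nat) \<Rightarrow> bool" where
  "panmagic_perm n \<pi> \<longleftrightarrow> \<pi> permutes {..<n} \<and> panstochastic n (perm_mat n \<pi>)"

definition convex_comb_panmagic :: "nat \<Rightarrow> (nat \<Rightarrow> nat \<Rightarrow> real) \<Rightarrow> bool" where
  "convex_comb_panmagic n M \<longleftrightarrow>
     (\<exists>S c. finite S \<and> (\<forall>\<pi>\<in>S. panmagic_perm n \<pi>) \<and>
        (\<forall>\<pi>\<in>S. 0 \<le> c \<pi>) \<and> (\<Sum>\<pi>\<in>S. c \<pi>) = (1::real) \<and>
        (\<forall>i<n. \<forall>j<n. M i j = (\<Sum>\<pi>\<in>S. c \<pi> * perm_mat n \<pi> i j)))"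

end

theory Submission
  imports Defs
begin

text \<open>
  Index rows and columns by residues mod n.  The witness is half the sum of the
  permutation matrices of the lines x = 2y and x = 2y - 12 (panmagic because 1, 2 and 3
  are units mod n), corrected by a signed sum of unit cells: eight negative cells,
  four on each line and in pairwise distinct columns, so that nonnegativity survives,
  and eight positive cells whose row, column and diagonal coordinates form the same
  multisets as those of the negative ones, so that no line sum changes.
  As n divides no divisor of 720, the entries at (0, 0), (0, 6) and (6, 6) are 1/2,
  so all other entries of column 6, of row 0 and of the main diagonal vanish.
  A panmagic permutation \<pi> occurring in a convex decomposition must then satisfy
  \<pi> 6 \<in> {0, 6} and \<pi> c = 0 for some c \<in> {0, 6}, and its unique fixed point lies in
  {0, 6}.  But \<pi> 6 = 6 forces \<pi> 0 = 0, a second fixed point, while \<pi> 6 = 0 leaves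
  neither 0 nor 6 fixed.
\<close>

section \<open>Indicators of residues\<close>

definition ind :: "nat \<Rightarrow> int \<Rightarrow> real" where
  "ind n x = of_bool (int n dvd x)"

lemma ind_cong: "int n dvd (x - y) \<Longrightarrow> ind n x = ind n y"
  unfolding ind_def using dvd_add_right_iff[of "int n" "x - y" y] by simp

lemma ind_mult_cong:
  "(int n dvd t \<Longrightarrow> int n dvd (s - s')) \<Longrightarrow> ind n s * ind n t = ind n s' * ind n t"
  by (cases "int n dvd t") (simp add: ind_cong[of n s s'], simp add: ind_def)

lemma sum_ind_affine:
  assumes "0 < n" and "coprime u (int n)"
  shows "(\<Sum>j<n. ind n (u * int j + c)) = 1"
proof -
  obtain s t where st: "s * u + t * int n = 1"
    using bezout_int[of u "int n"] assms(2) by (auto simp: coprime_iff_gcd_eq_1)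
  define j0 where "j0 = nat ((- c * s) mod int n)"
  have j0: "j0 < n" "int j0 = (- c * s) mod int n"
    using assms(1) by (simp_all add: j0_def nat_less_iff)
  have "u * int j0 + c = u * (int j0 + c * s) + c * t * int n"
  proof -
    have "c = c * (s * u + t * int n)"
      using st by simp
    then show ?thesis
      by (simp only: algebra_simps)
  qed
  moreover have "int n dvd (int j0 + c * s)"
    using mod_eq_dvd_iff[of "(- c * s) mod int n" "int n" "- c * s"] j0(2) by simp
  ultimately have solution: "int n dvd (u * int j0 + c)"
    by simp
  have unique: "j = j0" if "j < n" "int n dvd (u * int j + c)" for j
  proof -
    have "int n dvd u * (int j - int j0)"
      using dvd_diff[OF that(2) solution] by (simp add: algebra_simps)
    then have "int n dvd (int j - int j0)"
      using assms(2) by (simp add: coprime_commute coprime_dvd_mult_right_iff)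
    then have "int j mod int n = int j0 mod int n"
      by (simp add: mod_eq_dvd_iff)
    then show ?thesis
      using that(1) j0(1) by simp
  qed
  have "(\<Sum>j<n. ind n (u * int j + c)) = (\<Sum>j<n. of_bool (j = j0))"
  proof (intro sum.cong refl)
    fix j assume "j \<in> {..<n}"
    then have "int n dvd (u * int j + c) \<longleftrightarrow> j = j0"
      using solution unique[of j] by blast
    then show "ind n (u * int j + c) = of_bool (j = j0)"
      by (simp add: ind_def)
  qed
  also have "\<dots> = 1"
    using j0(1) by simp
  finally show ?thesis .
qed

lemma sum_ind_distinct_le:
  assumes "distinct (map (\<lambda>b. b mod int n) bs)"
  shows "(\<Sum>b\<leftarrow>bs. ind n (y - b)) \<le> 1"
proof -
  have "ind n (y - b) = of_bool (y mod int n = b mod int n)" for b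
    unfolding ind_def by (simp only: mod_eq_dvd_iff)
  then have "(\<Sum>b\<leftarrow>bs. ind n (y - b)) = (\<Sum>r\<leftarrow>map (\<lambda>b. b mod int n) bs. of_bool (y mod int n = r))"
    by (simp only: map_map comp_def)
  also have "\<dots> = (\<Sum>r\<in>set (map (\<lambda>b. b mod int n) bs). of_bool (y mod int n = r))"
    using assms by (rule sum_list_distinct_conv_sum_set)
  also have "\<dots> \<le> 1"
    by (simp add: of_bool_def)
  finally show ?thesis .
qed

section \<open>Periodic matrices and their line sums\<close>

lemma mod_add_diff_mod:
  fixes a j n :: nat
  shows "j \<le> n \<Longrightarrow> ((a + j) mod n + n - j) mod n = a mod n"
  by (metis Nat.add_diff_assoc add.assoc le_add_diff_inverse mod_add_left_eq mod_add_self2)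

lemma mod_diff_add_mod:
  fixes a j n :: nat
  shows "j \<le> n \<Longrightarrow> ((a + n - j) mod n + j) mod n = a mod n"
  by (simp add: mod_add_left_eq)

lemma sum_upward_diagonal:
  fixes k n :: nat
  assumes "k < n"
  shows "(\<Sum>(i, j)\<in>{(i, j). i < n \<and> j < n \<and> (i + j) mod n = k}. f i j)
       = (\<Sum>j<n. f ((k + n - j) mod n) j)"
proof (rule sym, rule sum.reindex_bij_witness[where j = "\<lambda>j. ((k + n - j) mod n, j)" and i = snd])
  fix p assume "p \<in> {(i, j). i < n \<and> j < n \<and> (i + j) mod n = k}"
  then show "((k + n - snd p) mod n, snd p) = p"
    using mod_add_diff_mod[of "snd p" n "fst p"] by auto
qed (use assms mod_diff_add_mod in auto)

lemma sum_downward_diagonal: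
  fixes k n :: nat
  assumes "k < n"
  shows "(\<Sum>(i, j)\<in>{(i, j). i < n \<and> j < n \<and> (i + n - j) mod n = k}. f i j)
       = (\<Sum>j<n. f ((k + j) mod n) j)"
proof (rule sym, rule sum.reindex_bij_witness[where j = "\<lambda>j. ((k + j) mod n, j)" and i = snd])
  fix p assume "p \<in> {(i, j). i < n \<and> j < n \<and> (i + n - j) mod n = k}"
  then show "((k + snd p) mod n, snd p) = p"
    using mod_diff_add_mod[of "snd p" n "fst p"] by auto
qed (use assms mod_add_diff_mod in auto)

lemma int_mod_diff_dvd: "int n dvd (int (m mod n) - int m)"
  by (simp add: zmod_int flip: mod_eq_dvd_iff)

definition constant_line_sums :: "nat \<Rightarrow> (int \<Rightarrow> int \<Rightarrow> real) \<Rightarrow> real \<Rightarrow> bool" where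
  "constant_line_sums n F s \<longleftrightarrow>
     (\<forall>x. (\<Sum>j<n. F x (int j)) = s) \<and> (\<forall>y. (\<Sum>i<n. F (int i) y) = s) \<and>
     (\<forall>x. (\<Sum>j<n. F (x - int j) (int j)) = s) \<and> (\<forall>x. (\<Sum>j<n. F (x + int j) (int j)) = s)"

lemma constant_line_sums_add:
  "constant_line_sums n F s \<Longrightarrow> constant_line_sums n G t \<Longrightarrow>
   constant_line_sums n (\<lambda>x y. F x y + G x y) (s + t)"
  by (simp add: constant_line_sums_def sum.distrib)

lemma constant_line_sums_divide:
  "constant_line_sums n F s \<Longrightarrow> constant_line_sums n (\<lambda>x y. F x y / c) (s / c)"
  by (simp add: constant_line_sums_def flip: sum_divide_distrib)

lemma panstochastic_periodicI:
  assumes periodic: "\<And>x x' y. int n dvd (x - x') \<Longrightarrow> F x y = F x' y"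
    and nonneg: "\<And>x y. 0 \<le> F x y"
    and sums: "constant_line_sums n F 1"
  shows "panstochastic n (\<lambda>i j. F (int i) (int j))"
proof -
  have up: "F (int ((k + n - j) mod n)) y = F (int k - int j) y" if "j < n" for k j y
  proof (rule periodic)
    have "int n dvd (int ((k + n - j) mod n) - int (k + n - j)) + int n"
      by (rule dvd_add[OF int_mod_diff_dvd dvd_refl])
    also have "(int ((k + n - j) mod n) - int (k + n - j)) + int n
        = int ((k + n - j) mod n) - (int k - int j)"
      using that by simp
    finally show "int n dvd (int ((k + n - j) mod n) - (int k - int j))" .
  qed
  have down: "F (int ((k + j) mod n)) y = F (int k + int j) y" for k j y
    using int_mod_diff_dvd[of n "k + j"] by (intro periodic) simp
  show ?thesis
    using sums nonneg
    by (simp add: panstochastic_def constant_line_sums_def sum_upward_diagonal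
        sum_downward_diagonal up down)
qed

section \<open>Lines and unit cells\<close>

definition line :: "nat \<Rightarrow> int \<Rightarrow> int \<Rightarrow> int \<Rightarrow> int \<Rightarrow> real" where
  "line n u c x y = ind n (x - (u * y + c))"

lemma constant_line_sums_line:
  assumes "0 < n" and "coprime u (int n)" "coprime (u + 1) (int n)" "coprime (u - 1) (int n)"
  shows "constant_line_sums n (line n u c) 1"
proof -
  have "coprime (- u) (int n)" "coprime (- (u + 1)) (int n)" "coprime (- (u - 1)) (int n)"
    using assms(2-4) by (simp_all only: coprime_minus_left_iff)
  note units = sum_ind_affine[OF assms(1) this(1)] sum_ind_affine[OF assms(1) this(2)]
    sum_ind_affine[OF assms(1) this(3)]
  have row: "(\<Sum>j<n. line n u c x (int j)) = 1" for x
    using units(1)[of "x - c"] by (simp add: line_def algebra_simps)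
  have col: "(\<Sum>i<n. line n u c (int i) y) = 1" for y
    using sum_ind_affine[of n 1 "- (u * y + c)"] assms(1) by (simp add: line_def algebra_simps)
  have up: "(\<Sum>j<n. line n u c (x - int j) (int j)) = 1" for x
    using units(2)[of "x - c"] by (simp add: line_def algebra_simps)
  have down: "(\<Sum>j<n. line n u c (x + int j) (int j)) = 1" for x
    using units(3)[of "x - c"] by (simp add: line_def algebra_simps)
  show ?thesis
    using row col up down by (simp add: constant_line_sums_def)
qed

definition cells :: "nat \<Rightarrow> (int \<times> int) list \<Rightarrow> int \<Rightarrow> int \<Rightarrow> real" where
  "cells n P x y = (\<Sum>(a, b)\<leftarrow>P. ind n (x - a) * ind n (y - b))"

lemma cells_append: "cells n (P @ Q) x y = cells n P x y + cells n Q x y"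
  by (simp add: cells_def)

lemma sum_sum_list_swap: "(\<Sum>j\<in>A. \<Sum>p\<leftarrow>P. f j p) = (\<Sum>p\<leftarrow>P. \<Sum>j\<in>A. f j p)"
  by (induction P) (simp_all add: sum.distrib)

lemma line_sums_cells:
  assumes "0 < n"
  shows "(\<Sum>j<n. cells n P x (int j)) = (\<Sum>a\<leftarrow>map fst P. ind n (x - a))"
    and "(\<Sum>i<n. cells n P (int i) y) = (\<Sum>b\<leftarrow>map snd P. ind n (y - b))"
    and "(\<Sum>j<n. cells n P (x - int j) (int j)) = (\<Sum>s\<leftarrow>map (\<lambda>(a, b). a + b) P. ind n (x - s))"
    and "(\<Sum>j<n. cells n P (x + int j) (int j)) = (\<Sum>d\<leftarrow>map (\<lambda>(a, b). a - b) P. ind n (x - d))"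
proof -
  have column_sum: "(\<Sum>j<n. ind n (int j - b)) = 1" for b
    using sum_ind_affine[OF assms, of 1 "- b"] by simp
  have "(\<Sum>j<n. ind n (x - a) * ind n (int j - b)) = ind n (x - a)" for a b
    using column_sum by (simp flip: sum_distrib_left)
  then show "(\<Sum>j<n. cells n P x (int j)) = (\<Sum>a\<leftarrow>map fst P. ind n (x - a))"
    by (simp add: cells_def sum_sum_list_swap case_prod_beta comp_def)
  have "(\<Sum>i<n. ind n (int i - a) * ind n (y - b)) = ind n (y - b)" for a b
    using column_sum by (simp flip: sum_distrib_right)
  then show "(\<Sum>i<n. cells n P (int i) y) = (\<Sum>b\<leftarrow>map snd P. ind n (y - b))"
    by (simp add: cells_def sum_sum_list_swap case_prod_beta comp_def)
  have shift_up: "ind n (x - int j - a) * ind n (int j - b) = ind n (x - (a + b)) * ind n (int j - b)"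
    for a b j
    by (rule ind_mult_cong) (simp add: dvd_diff_commute algebra_simps)
  have "(\<Sum>j<n. ind n (x - int j - a) * ind n (int j - b)) = ind n (x - (a + b))" for a b
    by (simp only: shift_up flip: sum_distrib_left) (simp add: column_sum)
  then show "(\<Sum>j<n. cells n P (x - int j) (int j)) = (\<Sum>s\<leftarrow>map (\<lambda>(a, b). a + b) P. ind n (x - s))"
    by (simp add: cells_def sum_sum_list_swap case_prod_beta comp_def)
  have shift_down: "ind n (x + int j - a) * ind n (int j - b) = ind n (x - (a - b)) * ind n (int j - b)"
    for a b j
    by (rule ind_mult_cong) (simp add: algebra_simps)
  have "(\<Sum>j<n. ind n (x + int j - a) * ind n (int j - b)) = ind n (x - (a - b))" for a b
    by (simp only: shift_down flip: sum_distrib_left) (simp add: column_sum)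
  then show "(\<Sum>j<n. cells n P (x + int j) (int j)) = (\<Sum>d\<leftarrow>map (\<lambda>(a, b). a - b) P. ind n (x - d))"
    by (simp add: cells_def sum_sum_list_swap case_prod_beta comp_def)
qed

definition same_projections :: "(int \<times> int) list \<Rightarrow> (int \<times> int) list \<Rightarrow> bool" where
  "same_projections P N \<longleftrightarrow>
     mset (map fst P) = mset (map fst N) \<and> mset (map snd P) = mset (map snd N) \<and>
     mset (map (\<lambda>(a, b). a + b) P) = mset (map (\<lambda>(a, b). a + b) N) \<and>
     mset (map (\<lambda>(a, b). a - b) P) = mset (map (\<lambda>(a, b). a - b) N)"

lemma sum_list_map_mset_cong:
  fixes f :: "'a \<Rightarrow> 'b::comm_monoid_add"
  assumes "mset xs = mset ys"
  shows "(\<Sum>x\<leftarrow>xs. f x) = (\<Sum>x\<leftarrow>ys. f x)"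
  using assms by (metis mset_map sum_mset_sum_list)

lemma constant_line_sums_cells_diff:
  assumes "0 < n" and "same_projections P N"
  shows "constant_line_sums n (\<lambda>x y. cells n P x y - cells n N x y) 0"
proof -
  have "(\<Sum>a\<leftarrow>map fst P. f a) = (\<Sum>a\<leftarrow>map fst N. f a)"
    "(\<Sum>b\<leftarrow>map snd P. f b) = (\<Sum>b\<leftarrow>map snd N. f b)"
    "(\<Sum>s\<leftarrow>map (\<lambda>(a, b). a + b) P. f s) = (\<Sum>s\<leftarrow>map (\<lambda>(a, b). a + b) N. f s)"
    "(\<Sum>d\<leftarrow>map (\<lambda>(a, b). a - b) P. f d) = (\<Sum>d\<leftarrow>map (\<lambda>(a, b). a - b) N. f d)"
    for f :: "int \<Rightarrow> real"
    using assms(2) unfolding same_projections_def by (blast intro: sum_list_map_mset_cong)+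
  then show ?thesis
    by (simp add: constant_line_sums_def sum_subtractf line_sums_cells[OF assms(1)])
qed

lemma cells_on_line_le:
  assumes on_line: "\<And>a b. (a, b) \<in> set Q \<Longrightarrow> a = u * b + c"
    and distinct: "distinct (map (\<lambda>b. b mod int n) (map snd Q))"
  shows "cells n Q x y \<le> line n u c x y"
proof -
  have on_line_term: "ind n (x - a) * ind n (y - b) = line n u c x y * ind n (y - b)"
    if "(a, b) \<in> set Q" for a b
  proof -
    have "x - (u * y + c) - (x - a) = u * (b - y)"
      using on_line[OF that] by (simp add: algebra_simps)
    then have "ind n (x - a) * ind n (y - b) = ind n (x - (u * y + c)) * ind n (y - b)"
      by (intro ind_mult_cong) (metis dvd_diff_commute dvd_mult)
    then show ?thesis
      by (simp add: line_def)
  qed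
  have "cells n Q x y = (\<Sum>(a, b)\<leftarrow>Q. line n u c x y * ind n (y - b))"
    unfolding cells_def using on_line_term by (intro arg_cong[where f = sum_list] map_cong) auto
  also have "\<dots> = line n u c x y * (\<Sum>b\<leftarrow>map snd Q. ind n (y - b))"
    by (induction Q) (auto simp: distrib_left)
  also have "\<dots> \<le> line n u c x y"
    using sum_ind_distinct_le[OF distinct, of y] by (simp add: line_def ind_def)
  finally show ?thesis .
qed

section \<open>Matrices outside the panmagic hull\<close>

lemma panstochastic_main_diagonal:
  assumes "panstochastic n M" and "0 < n"
  shows "(\<Sum>j<n. M j j) = 1"
proof -
  have "\<forall>k<n. (\<Sum>(i, j)\<in>{(i, j). i < n \<and> j < n \<and> (i + n - j) mod n = k}. M i j) = 1"
    using assms(1) unfolding panstochastic_def by (elim conjE)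
  then have "(\<Sum>(i, j)\<in>{(i, j). i < n \<and> j < n \<and> (i + n - j) mod n = 0}. M i j) = 1"
    using assms(2) by blast
  then show ?thesis
    by (simp add: sum_downward_diagonal[OF assms(2)])
qed

lemma panmagic_perm_unique_fixpoint:
  assumes "panmagic_perm n \<pi>" and "0 < n"
  shows "\<exists>!j. j < n \<and> \<pi> j = j"
proof -
  have "panstochastic n (perm_mat n \<pi>)"
    using assms(1) by (simp add: panmagic_perm_def)
  then have "(\<Sum>j<n. perm_mat n \<pi> j j) = 1"
    using assms(2) by (rule panstochastic_main_diagonal)
  moreover have "(\<Sum>j<n. perm_mat n \<pi> j j) = real (card {j \<in> {..<n}. j = \<pi> j})"
    unfolding perm_mat_def by (simp flip: sum.inter_filter)
  ultimately have "card {j \<in> {..<n}. j = \<pi> j} = 1"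
    by simp
  then obtain j0 where j0: "{j \<in> {..<n}. j = \<pi> j} = {j0}"
    by (rule card_1_singletonE)
  show ?thesis
  proof
    have "j0 \<in> {j \<in> {..<n}. j = \<pi> j}"
      using j0 by simp
    then show "j0 < n \<and> \<pi> j0 = j0"
      by simp
  next
    fix j assume "j < n \<and> \<pi> j = j"
    then have "j \<in> {j \<in> {..<n}. j = \<pi> j}"
      by simp
    then show "j = j0"
      unfolding j0 by simp
  qed
qed

lemma convex_comb_panmagic_obtains_perm:
  assumes "convex_comb_panmagic n M"
  obtains \<pi> where "panmagic_perm n \<pi>" and "\<And>j. j < n \<Longrightarrow> 0 < M (\<pi> j) j"
proof -
  obtain S c where S: "finite S" "\<forall>\<pi>\<in>S. panmagic_perm n \<pi>" "\<forall>\<pi>\<in>S. 0 \<le> c \<pi>"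
      "(\<Sum>\<pi>\<in>S. c \<pi>) = 1" "\<forall>i<n. \<forall>j<n. M i j = (\<Sum>\<pi>\<in>S. c \<pi> * perm_mat n \<pi> i j)"
    using assms unfolding convex_comb_panmagic_def by blast
  have "\<exists>\<pi>\<in>S. 0 < c \<pi>"
  proof (rule ccontr)
    assume "\<not> (\<exists>\<pi>\<in>S. 0 < c \<pi>)"
    then have "(\<Sum>\<pi>\<in>S. c \<pi>) \<le> 0"
      by (intro sum_nonpos) (auto simp: not_less)
    then show False
      using S(4) by simp
  qed
  then obtain \<pi> where \<pi>: "\<pi> \<in> S" "0 < c \<pi>"
    by blast
  have "0 < M (\<pi> j) j" if "j < n" for j
  proof -
    have "\<pi> permutes {..<n}"
      using S(2) \<pi>(1) by (simp add: panmagic_perm_def)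
    then have "\<pi> j < n"
      using permutes_in_image[of \<pi> "{..<n}" j] that by simp
    then have "M (\<pi> j) j = (\<Sum>\<sigma>\<in>S. c \<sigma> * perm_mat n \<sigma> (\<pi> j) j)"
      using S(5) that by blast
    also have "\<dots> \<ge> c \<pi> * perm_mat n \<pi> (\<pi> j) j"
      using S(1,3) \<pi>(1) by (intro member_le_sum) (auto simp: perm_mat_def)
    finally show ?thesis
      using \<pi>(2) by (simp add: perm_mat_def)
  qed
  then show ?thesis
    using S(2) \<pi>(1) that by blast
qed

lemma positive_in_two_point_support:
  fixes f :: "nat \<Rightarrow> real"
  assumes "\<And>j. j < n \<Longrightarrow> 0 \<le> f j" and "(\<Sum>j<n. f j) \<le> f a + f b"
    and "a < n" "b < n" "a \<noteq> b" and "j < n" "0 < f j"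
  shows "j = a \<or> j = b"
proof (rule ccontr)
  assume "\<not> (j = a \<or> j = b)"
  then have "f a + f b + f j = (\<Sum>i\<in>{a, b, j}. f i)"
    using assms(5) by simp
  also have "\<dots> \<le> (\<Sum>j<n. f j)"
    using assms(1,3,4,6) by (intro sum_mono2) auto
  finally show False
    using assms(2,7) by simp
qed

lemma not_convex_comb_panmagic_corner:
  assumes pan: "panstochastic n M" and "a < n" "b < n" "a \<noteq> b"
    and column: "M a a + M b a = 1" and row: "M b a + M b b = 1" and diagonal: "M a a + M b b = 1"
  shows "\<not> convex_comb_panmagic n M"
proof
  assume "convex_comb_panmagic n M"
  then obtain \<pi> where \<pi>: "panmagic_perm n \<pi>" and pos: "\<And>j. j < n \<Longrightarrow> 0 < M (\<pi> j) j"
    by (rule convex_comb_panmagic_obtains_perm) blast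
  have n: "0 < n"
    using assms(2) by simp
  have perm: "\<pi> permutes {..<n}"
    using \<pi> by (simp add: panmagic_perm_def)
  have nonneg: "0 \<le> M i j" if "i < n" "j < n" for i j
    using pan that by (simp add: panstochastic_def)
  have "\<pi> a = a \<or> \<pi> a = b"
  proof (rule positive_in_two_point_support[where f = "\<lambda>i. M i a"])
    show "(\<Sum>i<n. M i a) \<le> M a a + M b a"
      using pan assms(2) column by (simp add: panstochastic_def)
    show "\<pi> a < n"
      using permutes_in_image[OF perm, of a] assms(2) by simp
  qed (use assms(2-4) nonneg pos in auto)
  obtain c where c: "c < n" "\<pi> c = b"
    using perm assms(3) by (metis lessThan_iff permutes_image imageE)
  have "c = a \<or> c = b"
  proof (rule positive_in_two_point_support[where f = "\<lambda>j. M b j"])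
    show "(\<Sum>j<n. M b j) \<le> M b a + M b b"
      using pan assms(3) row by (simp add: panstochastic_def)
    show "0 < M b c"
      using pos[OF c(1)] c(2) by simp
  qed (use assms(2-4) nonneg c in auto)
  obtain j0 where j0: "j0 < n" "\<pi> j0 = j0" and fixpoint_unique: "\<And>j. j < n \<Longrightarrow> \<pi> j = j \<Longrightarrow> j = j0"
    using panmagic_perm_unique_fixpoint[OF \<pi> n] by blast
  have "j0 = a \<or> j0 = b"
  proof (rule positive_in_two_point_support[where f = "\<lambda>j. M j j"])
    show "(\<Sum>j<n. M j j) \<le> M a a + M b b"
      using panstochastic_main_diagonal[OF pan n] diagonal by simp
    show "0 < M j0 j0"
      using pos[OF j0(1)] j0(2) by simp
  qed (use assms(2-4) nonneg j0 in auto)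
  show False
    using \<open>\<pi> a = a \<or> \<pi> a = b\<close>
  proof
    assume "\<pi> a = a"
    then have "\<pi> b = b"
      using \<open>c = a \<or> c = b\<close> c(2) assms(4) by auto
    then show False
      using fixpoint_unique \<open>\<pi> a = a\<close> assms(2-4) by metis
  next
    assume "\<pi> a = b"
    moreover have "inj \<pi>"
      using perm by (rule permutes_inj)
    ultimately show False
      using \<open>j0 = a \<or> j0 = b\<close> j0(2) assms(4) by (metis injD)
  qed
qed

section \<open>The witness\<close>

definition plus_cells :: "(int \<times> int) list" where
  "plus_cells = [(6, 6), (12, 3), (18, 12), (10, 8), (12, 9), (4, 5), (10, 14), (16, 11)]"

definition minus_cells :: "(int \<times> int) list" where
  "minus_cells = map (\<lambda>b. (2 * b, b)) [3, 5, 6, 9] @ map (\<lambda>b. (2 * b - 12, b)) [8, 11, 12, 14]"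

definition witness :: "nat \<Rightarrow> int \<Rightarrow> int \<Rightarrow> real" where
  "witness n x y =
     (line n 2 0 x y + line n 2 (-12) x y + (cells n plus_cells x y - cells n minus_cells x y)) / 2"

lemma same_projections_plus_minus: "same_projections plus_cells minus_cells"
  by (simp add: same_projections_def plus_cells_def minus_cells_def)

lemma witness_periodic:
  assumes "int n dvd (x - x')"
  shows "witness n x y = witness n x' y"
proof -
  have "ind n (x - t) = ind n (x' - t)" for t
    using assms by (intro ind_cong) simp
  then show ?thesis
    by (simp only: witness_def line_def cells_def)
qed

context
  fixes n :: nat
  assumes n_gt_1: "1 < n" and coprime_30: "coprime n 30"
begin

text \<open>720 = 2^4 * 3^2 * 5 is a multiple of every coordinate difference below that must
  not vanish mod n.\<close>

lemma coprime_divisor_720: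
  assumes "d dvd 720"
  shows "coprime (int n) d"
proof -
  have "coprime (int n) 30"
    using coprime_30 coprime_int_iff[of n 30] by simp
  then have "coprime (int n) (30 ^ 4)"
    unfolding coprime_power_right_iff by simp
  moreover have "d dvd 30 ^ 4"
    using assms by (rule dvd_trans) simp
  ultimately show ?thesis
    by (rule coprime_divisors[OF dvd_refl, rotated])
qed

lemma not_dvd_if_dvd_720:
  assumes "d dvd 720"
  shows "\<not> int n dvd d"
proof
  assume "int n dvd d"
  then have "\<bar>int n\<bar> = 1"
    using coprime_common_divisor_int[OF coprime_divisor_720[OF assms] dvd_refl] by blast
  then show False
    using n_gt_1 by simp
qed

lemma seven_le_n: "7 \<le> n"
proof (rule ccontr)
  assume "\<not> 7 \<le> n"
  then have "n \<in> {2, 3, 4, 5, 6}"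
    using n_gt_1 by auto
  then have "int n dvd 720"
    by auto
  then show False
    using not_dvd_if_dvd_720[of "int n"] by simp
qed

lemma witness_nonneg: "0 \<le> witness n x y"
proof -
  have "cells n (map (\<lambda>b. (2 * b, b)) [3, 5, 6, 9]) x y \<le> line n 2 0 x y"
    by (rule cells_on_line_le) (use n_gt_1 in \<open>auto simp: mod_eq_dvd_iff not_dvd_if_dvd_720\<close>)
  moreover have "cells n (map (\<lambda>b. (2 * b - 12, b)) [8, 11, 12, 14]) x y \<le> line n 2 (-12) x y"
    by (rule cells_on_line_le) (use n_gt_1 in \<open>auto simp: mod_eq_dvd_iff not_dvd_if_dvd_720\<close>)
  moreover have "0 \<le> cells n plus_cells x y"
    unfolding cells_def by (intro sum_list_nonneg) (auto simp: ind_def)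
  ultimately show ?thesis
    unfolding witness_def minus_cells_def cells_append by (intro divide_nonneg_nonneg) linarith+
qed

lemma constant_line_sums_witness: "constant_line_sums n (witness n) 1"
proof -
  have n: "0 < n"
    using n_gt_1 by simp
  have "coprime 2 (int n)" "coprime (2 + 1) (int n)" "coprime (2 - 1) (int n)"
    using coprime_divisor_720[of 2] coprime_divisor_720[of 3]
    by (simp_all add: coprime_commute)
  then have lines: "constant_line_sums n (line n 2 c) 1" for c
    using n by (intro constant_line_sums_line)
  show ?thesis
    using constant_line_sums_divide[OF constant_line_sums_add[OF
        constant_line_sums_add[OF lines[of 0] lines[of "-12"]]
        constant_line_sums_cells_diff[OF n same_projections_plus_minus]], of 2]
    by (simp add: witness_def[abs_def])
qed

lemma witness_values: "witness n 0 0 = 1 / 2" "witness n 0 6 = 1 / 2" "witness n 6 6 = 1 / 2"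
  using n_gt_1 not_dvd_if_dvd_720
  by (simp_all add: witness_def line_def cells_def plus_cells_def minus_cells_def ind_def)

end

theorem lemma4p1:
  fixes n :: nat
  assumes "n > 1" and "gcd n 30 = 1"
  shows "\<exists>M. panstochastic n M \<and> \<not> convex_comb_panmagic n M"
proof -
  have coprime: "coprime n 30"
    using assms(2) by (simp add: coprime_iff_gcd_eq_1)
  let ?M = "\<lambda>i j. witness n (int i) (int j)"
  have pan: "panstochastic n ?M"
    using witness_periodic witness_nonneg[OF assms(1) coprime]
      constant_line_sums_witness[OF assms(1) coprime]
    by (rule panstochastic_periodicI)
  moreover have "\<not> convex_comb_panmagic n ?M"
  proof (rule not_convex_comb_panmagic_corner[where a = 6 and b = 0])
    show "6 < n"
      using seven_le_n[OF assms(1) coprime] by simp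
  qed (use pan assms(1) witness_values[OF assms(1) coprime] in simp_all)
  ultimately show ?thesis
    by blast
qed

end
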